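(* Let $X\sim\zeta$ be a random variable on a measurable space $\mathcal{X}$, let $\hat{\mathcal{X}}$ be a measurable space and $d:\mathcal{X}\times\hat{\mathcal{X}}\to\mathbb{R}$ a measurable distortion function. Let $\eta$ be a probability distribution on $\mathcal{X}$ (possibly different from $\zeta$), let $b\in(0,\infty]$ and define for $\lambda\in(-b,0]$ \[ \phi(\lambda)=\sup_{\hat x\in\hat{\mathcal{X}}}\log\mathbb{E}_{X\sim\eta}\big[e^{\lambda d(X,\hat x)}\big]. \] Then for every $r\ge 0$, \[ \inf_{P_{\hat X|X}:\ I(\hat X;X)\le r}\mathbb{E}\big[d(X,\hat X)\big]\ \ge\ \sup_{-b<\lambda<0}\left\{\frac1\lambda\big[r+D(\zeta\|\eta)\big]+\frac1\lambda\phi(\lambda)\right\}, \] where the infimum is over Markov kernels $P_{\hat X|X}$ from $\mathcal{X}$ to $\hat{\mathcal{X}}$ with $X\sim\zeta$.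
   Context: $D(\cdot\|\cdot)$ is the Kullback–Leibler divergence and $I(\cdot;\cdot)$ mutual information. Expectations $\mathbb{E}[d(X,\hat X)]$ are assumed well defined. *)

theory Defs
  imports "HOL-Probability.Probability"
begin

definition ln_ennreal :: "ennreal \<Rightarrow> ereal" where
  "ln_ennreal x = (if x = \<infinity> then \<infinity> else if x = 0 then - \<infinity> else ereal (ln (enn2real x)))"

text \<open>Since f ln f \<ge> -1/e, the integral is computed as a
  nonnegative integral of f ln f + 1/e minus 1/e (Q is a probability measure).\<close>
definition kl_div :: "'a measure \<Rightarrow> 'a measure \<Rightarrow> ereal" where
  "kl_div P Q = (if absolutely_continuous Q P then
     (let f = (\<lambda>x. enn2real (RN_deriv Q P x)) in
       enn2ereal (\<integral>\<^sup>+ x. ennreal (f x * ln (f x) + exp (-1)) \<partial>Q) - ereal (exp (-1)))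
   else \<infinity>)"

definition joint :: "'a measure \<Rightarrow> 'b measure \<Rightarrow> ('a \<Rightarrow> 'b measure) \<Rightarrow> ('a \<times> 'b) measure" where
  "joint mu Y K = mu \<bind> (\<lambda>x. distr (K x) (mu \<Otimes>\<^sub>M Y) (\<lambda>y. (x, y)))"

definition mutual_info :: "'a measure \<Rightarrow> 'b measure \<Rightarrow> ('a \<Rightarrow> 'b measure) \<Rightarrow> ereal" where
  "mutual_info mu Y K = kl_div (joint mu Y K) (mu \<Otimes>\<^sub>M distr (joint mu Y K) Y snd)"

definition expect_defined :: "'c measure \<Rightarrow> ('c \<Rightarrow> real) \<Rightarrow> bool" where
  "expect_defined M f \<longleftrightarrow>
     (\<integral>\<^sup>+ z. ennreal (f z) \<partial>M) \<noteq> \<infinity> \<or> (\<integral>\<^sup>+ z. ennreal (- f z) \<partial>M) \<noteq> \<infinity>"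

definition ereal_expect :: "'c measure \<Rightarrow> ('c \<Rightarrow> real) \<Rightarrow> ereal" where
  "ereal_expect M f = enn2ereal (\<integral>\<^sup>+ z. ennreal (f z) \<partial>M) - enn2ereal (\<integral>\<^sup>+ z. ennreal (- f z) \<partial>M)"

definition phi :: "'a measure \<Rightarrow> 'b measure \<Rightarrow> ('a \<times> 'b \<Rightarrow> real) \<Rightarrow> real \<Rightarrow> ereal" where
  "phi eta Y d l = (SUP y \<in> space Y. ln_ennreal (\<integral>\<^sup>+ x. ennreal (exp (l * d (x, y))) \<partial>eta))"

end

theory Submission
  imports Defs
begin

(* Write zeta = q \<cdot> eta and P_{X,Xhat} = p \<cdot> (zeta \<otimes> P_Xhat), so that the joint law
   has density q(x) p(x,y) with respect to eta \<otimes> P_Xhat. Integrating Fenchel's inequality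
   w t \<le> w ln w - w + exp t with w = q p and t = \<lambda> d - \<phi>(\<lambda>) against eta \<otimes> P_Xhat gives
     \<lambda> E[d] - \<phi>(\<lambda>) \<le> D(zeta||eta) + I(Xhat;X) - 1 + \<integral> exp (\<lambda> d - \<phi>(\<lambda>)),
   and the last integral is at most 1 by the definition of \<phi>. Dividing by \<lambda> < 0 gives
   the bound. Nothing is assumed integrable, so every integrand is split into its positive and
   negative parts, which are kept on opposite sides of an inequality between nonnegative
   integrals. *)

lemma mult_le_mult_ln_add_exp:
  fixes w t :: real
  assumes "0 \<le> w"
  shows "w * t \<le> w * ln w - w + exp t"
proof (cases "w = 0")
  case False
  then have w: "w > 0" using assms by simp
  have "1 + (t - ln w) \<le> exp (t - ln w)" by (rule exp_ge_add_one_self)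
  also have "exp (t - ln w) = exp t / w" using w by (simp add: exp_diff)
  finally have "(1 + (t - ln w)) * w \<le> exp t" using w by (simp add: pos_le_divide_eq)
  then show ?thesis using w by (simp add: algebra_simps)
qed simp

lemma mult_ln_ge_minus_exp_minus_one:
  fixes x :: real
  assumes "0 \<le> x"
  shows "- exp (-1) \<le> x * ln x"
  using mult_le_mult_ln_add_exp[OF assms, of "-1"] by simp

(* Fenchel's inequality for w = q p and t = - a - b, every term moved to the side where it is
   nonnegative. *)
lemma fenchel_pos_neg_parts:
  fixes q p a b :: real
  assumes q: "0 \<le> q" and p: "0 \<le> p"
  shows "q * (p * (max 0 (-a) + max 0 (- ln q) + (max 0 (-b) + 1))) + q * max 0 (- (p * ln p))
    \<le> q * (p * (max 0 a + max 0 (ln q) + max 0 b)) + q * max 0 (p * ln p) + exp (- a - b)"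
proof -
  have split: "max 0 x = x + max 0 (- x)" for x :: real by auto
  have "q * p * (- a - b) \<le> q * p * ln (q * p) - q * p + exp (- a - b)"
    using q p by (intro mult_le_mult_ln_add_exp) simp
  moreover have "q * p * ln (q * p) = q * (p * ln p) + q * p * ln q"
    using q p by (cases "q = 0 \<or> p = 0") (auto simp: ln_mult algebra_simps)
  ultimately show ?thesis
    unfolding split[of a] split[of "ln q"] split[of b] split[of "p * ln p"]
    by (simp add: algebra_simps)
qed

lemma ennreal_max_0: "ennreal (max 0 x) = ennreal x"
  by (cases "x \<ge> 0") (auto simp: ennreal_neg)

lemma fenchel_pos_neg_parts_ennreal:
  fixes q p c x b :: real
  assumes q: "0 \<le> q" and p: "0 \<le> p" and c: "0 \<le> c"
  shows "ennreal q * (ennreal p * (ennreal c * ennreal (- x) + ennreal (- ln q) + (ennreal (- b) + 1)))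
           + ennreal q * ennreal (- (p * ln p))
    \<le> ennreal q * (ennreal p * (ennreal c * ennreal x + ennreal (ln q) + ennreal b))
           + ennreal q * ennreal (p * ln p) + ennreal (exp (- (c * x) - b))"
    (is "?L \<le> ?R")
proof -
  have "max 0 (- (c * x)) = c * max 0 (- x)" "max 0 (c * x) = c * max 0 x"
    using c by (simp_all add: max_mult_distrib_left)
  then have "?L = ennreal (q * (p * (max 0 (- (c * x)) + max 0 (- ln q) + (max 0 (- b) + 1)))
                     + q * max 0 (- (p * ln p)))"
    and "?R = ennreal (q * (p * (max 0 (c * x) + max 0 (ln q) + max 0 b))
                     + q * max 0 (p * ln p) + exp (- (c * x) - b))"
    using q p c by (simp_all add: ennreal_mult ennreal_plus ennreal_max_0 add_nonneg_nonneg)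
  then show ?thesis
    using fenchel_pos_neg_parts[OF q p, of "c * x" b] by (simp only:) (rule ennreal_leI)
qed

lemma nn_integral_shift_eq_diff:
  fixes g :: "'a \<Rightarrow> real"
  assumes M: "prob_space M" and [measurable]: "g \<in> borel_measurable M"
    and c: "\<And>x. - c \<le> g x" "0 \<le> c"
  shows "enn2ereal (\<integral>\<^sup>+x. ennreal (g x + c) \<partial>M) - ereal c
    = enn2ereal (\<integral>\<^sup>+x. ennreal (g x) \<partial>M) - enn2ereal (\<integral>\<^sup>+x. ennreal (- g x) \<partial>M)"
proof -
  interpret prob_space M by fact
  have shift: "ennreal (a + c) + ennreal (- a) = ennreal a + ennreal c" if "- c \<le> a" for a
    using that c(2) by (cases "0 \<le> a") (simp_all add: ennreal_neg flip: ennreal_plus)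
  have "(\<integral>\<^sup>+x. ennreal (g x + c) \<partial>M) + (\<integral>\<^sup>+x. ennreal (- g x) \<partial>M)
      = (\<integral>\<^sup>+x. ennreal (g x) + ennreal c \<partial>M)"
    by (simp add: c shift flip: nn_integral_add)
  also have "\<dots> = (\<integral>\<^sup>+x. ennreal (g x) \<partial>M) + ennreal c"
    by (simp add: nn_integral_add emeasure_space_1)
  finally have sum: "enn2ereal (\<integral>\<^sup>+x. ennreal (g x + c) \<partial>M) + enn2ereal (\<integral>\<^sup>+x. ennreal (- g x) \<partial>M)
      = enn2ereal (\<integral>\<^sup>+x. ennreal (g x) \<partial>M) + ereal c"
    using c(2) by (metis enn2ereal_ennreal plus_ennreal.rep_eq)
  have "(\<integral>\<^sup>+x. ennreal (- g x) \<partial>M) \<le> (\<integral>\<^sup>+x. ennreal c \<partial>M)"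
    using c by (intro nn_integral_mono ennreal_leI) (simp add: minus_le_iff)
  then have "(\<integral>\<^sup>+x. ennreal (- g x) \<partial>M) \<noteq> \<infinity>"
    by (auto simp: emeasure_space_1 top_unique)
  then obtain n where "enn2ereal (\<integral>\<^sup>+x. ennreal (- g x) \<partial>M) = ereal n"
    by (cases "\<integral>\<^sup>+x. ennreal (- g x) \<partial>M") auto
  with sum show ?thesis
    by (cases "enn2ereal (\<integral>\<^sup>+x. ennreal (g x + c) \<partial>M)";
        cases "enn2ereal (\<integral>\<^sup>+x. ennreal (g x) \<partial>M)") simp_all
qed

lemma nn_integral_neg_mult_ln_le:
  assumes "prob_space M" and "\<And>x. 0 \<le> f x"
  shows "(\<integral>\<^sup>+x. ennreal (- (f x * ln (f x))) \<partial>M) \<le> ennreal (exp (-1))"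
proof -
  have "(\<integral>\<^sup>+x. ennreal (- (f x * ln (f x))) \<partial>M) \<le> (\<integral>\<^sup>+x. ennreal (exp (-1)) \<partial>M)"
    using mult_ln_ge_minus_exp_minus_one[OF assms(2)]
    by (intro nn_integral_mono ennreal_leI) (simp add: minus_le_iff)
  then show ?thesis by (simp add: prob_space.emeasure_space_1[OF assms(1)])
qed

lemma kl_div_eq_diff_nn_integral:
  assumes "prob_space M" and "absolutely_continuous M N"
  defines "f \<equiv> \<lambda>x. enn2real (RN_deriv M N x)"
  shows "kl_div N M = enn2ereal (\<integral>\<^sup>+x. ennreal (f x * ln (f x)) \<partial>M)
                     - enn2ereal (\<integral>\<^sup>+x. ennreal (- (f x * ln (f x))) \<partial>M)"
  using assms unfolding kl_div_def f_def Let_def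
  by (simp add: nn_integral_shift_eq_diff mult_ln_ge_minus_exp_minus_one)

lemma density_enn2real_RN_deriv:
  assumes "sigma_finite_measure M" "sigma_finite_measure N"
    and "absolutely_continuous M N" "sets N = sets M"
  shows "density M (\<lambda>x. ennreal (enn2real (RN_deriv M N x))) = N"
proof -
  interpret sigma_finite_measure M by fact
  have "AE x in M. RN_deriv M N x \<noteq> \<infinity>"
    using assms by (intro RN_deriv_finite)
  then have "density M (\<lambda>x. ennreal (enn2real (RN_deriv M N x))) = density M (RN_deriv M N)"
    by (intro density_cong) (auto simp: ennreal_enn2real_if)
  also have "\<dots> = N" using assms by (intro density_RN_deriv)
  finally show ?thesis .
qed

lemma kl_div_le_ereal_parts:
  assumes M: "prob_space M" and N: "prob_space N" and sets: "sets N = sets M"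
    and kl: "kl_div N M \<le> ereal r"
  defines "f \<equiv> \<lambda>x. enn2real (RN_deriv M N x)"
  shows "N = density M (\<lambda>x. ennreal (f x))"
    and "enn2ereal (\<integral>\<^sup>+x. ennreal (f x * ln (f x)) \<partial>M)
           - enn2ereal (\<integral>\<^sup>+x. ennreal (- (f x * ln (f x))) \<partial>M) \<le> ereal r"
    and "(\<integral>\<^sup>+x. ennreal (- (f x * ln (f x))) \<partial>M) \<noteq> \<infinity>"
proof -
  have ac: "absolutely_continuous M N"
    using kl by (auto simp: kl_div_def split: if_splits)
  show "N = density M (\<lambda>x. ennreal (f x))"
    unfolding f_def using M N ac sets
    by (intro density_enn2real_RN_deriv[symmetric] prob_space_imp_sigma_finite)
  show "enn2ereal (\<integral>\<^sup>+x. ennreal (f x * ln (f x)) \<partial>M)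
      - enn2ereal (\<integral>\<^sup>+x. ennreal (- (f x * ln (f x))) \<partial>M) \<le> ereal r"
    using kl kl_div_eq_diff_nn_integral[OF M ac] by (simp add: f_def)
  show "(\<integral>\<^sup>+x. ennreal (- (f x * ln (f x))) \<partial>M) \<noteq> \<infinity>"
    using nn_integral_neg_mult_ln_le[of M f, OF M] by (auto simp: f_def top_unique)
qed

lemma kl_div_neq_MInfty: "kl_div N M \<noteq> - \<infinity>"
proof -
  have "enn2ereal S - ereal c \<noteq> - \<infinity>" for S c
    using enn2ereal_nonneg[of S] by (cases "enn2ereal S") auto
  then show ?thesis by (simp add: kl_div_def Let_def)
qed

lemma measurable_kernel_pair:
  assumes "K \<in> M \<rightarrow>\<^sub>M prob_algebra Y"
  shows "(\<lambda>x. distr (K x) (M \<Otimes>\<^sub>M Y) (\<lambda>y. (x, y))) \<in> M \<rightarrow>\<^sub>M prob_algebra (M \<Otimes>\<^sub>M Y)"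
  by (rule measurable_distr_prob_space2[OF assms]) simp

lemma
  assumes "prob_space M" and K: "K \<in> M \<rightarrow>\<^sub>M prob_algebra Y"
  shows prob_space_joint: "prob_space (joint M Y K)"
    and sets_joint: "sets (joint M Y K) = sets (M \<Otimes>\<^sub>M Y)"
proof -
  have M: "M \<in> space (prob_algebra M)" using assms(1) by (simp add: space_prob_algebra)
  show "prob_space (joint M Y K)"
    unfolding joint_def by (rule prob_space_bind'[OF M measurable_kernel_pair[OF K]])
  show "sets (joint M Y K) = sets (M \<Otimes>\<^sub>M Y)"
    unfolding joint_def by (rule sets_bind'[OF M measurable_kernel_pair[OF K]])
qed

lemma nn_integral_joint_fst:
  assumes K: "K \<in> M \<rightarrow>\<^sub>M prob_algebra Y" and [measurable]: "g \<in> borel_measurable M"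
  shows "(\<integral>\<^sup>+z. g (fst z) \<partial>joint M Y K) = (\<integral>\<^sup>+x. g x \<partial>M)"
proof -
  let ?K' = "\<lambda>x. distr (K x) (M \<Otimes>\<^sub>M Y) (\<lambda>y. (x, y))"
  have "(\<integral>\<^sup>+z. g (fst z) \<partial>joint M Y K) = (\<integral>\<^sup>+x. \<integral>\<^sup>+z. g (fst z) \<partial>?K' x \<partial>M)"
    unfolding joint_def
    by (rule nn_integral_bind[OF _ measurable_prob_algebraD[OF measurable_kernel_pair[OF K]]])
      measurable
  also have "\<dots> = (\<integral>\<^sup>+x. g x \<partial>M)"
  proof (intro nn_integral_cong)
    fix x assume x: "x \<in> space M"
    then have Kx: "prob_space (K x)" "sets (K x) = sets Y"
      using measurable_space[OF K x] by (auto simp: space_prob_algebra)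
    then have "(\<integral>\<^sup>+z. g (fst z) \<partial>?K' x) = (\<integral>\<^sup>+y. g x \<partial>K x)"
      using x by (subst nn_integral_distr) (auto cong: measurable_cong_sets)
    also have "\<dots> = g x" using Kx by (simp add: prob_space.emeasure_space_1)
    finally show "(\<integral>\<^sup>+z. g (fst z) \<partial>?K' x) = g x" .
  qed
  finally show ?thesis .
qed

lemma ln_ennreal_le_ereal_iff: "ln_ennreal x \<le> ereal c \<longleftrightarrow> x \<le> ennreal (exp c)"
proof (cases x)
  case (real v)
  show ?thesis
  proof (cases "v = 0")
    case False
    then have "0 < v" using real by simp
    then have "ln v \<le> c \<longleftrightarrow> v \<le> exp c"
      by (metis exp_le_cancel_iff exp_ln)
    then show ?thesis using real False by (simp add: ln_ennreal_def)
  qed (use real in \<open>simp add: ln_ennreal_def\<close>)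
qed (simp add: ln_ennreal_def top_unique)

lemma ln_ennreal_eq_MInfty_iff: "ln_ennreal x = - \<infinity> \<longleftrightarrow> x = 0"
  by (simp add: ln_ennreal_def)

lemma ln_nn_integral_exp_le_phi:
  "y \<in> space Y \<Longrightarrow> ln_ennreal (\<integral>\<^sup>+x. ennreal (exp (l * d (x, y))) \<partial>eta) \<le> phi eta Y d l"
  unfolding phi_def by (rule SUP_upper)

lemma nn_integral_exp_le_exp_phi:
  assumes "phi eta Y d l \<le> ereal c" and "y \<in> space Y"
  shows "(\<integral>\<^sup>+x. ennreal (exp (l * d (x, y))) \<partial>eta) \<le> ennreal (exp c)"
  using order_trans[OF ln_nn_integral_exp_le_phi[OF assms(2)] assms(1)]
  by (simp flip: ln_ennreal_le_ereal_iff)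

lemma phi_neq_MInfty:
  assumes "prob_space eta" and "y \<in> space Y"
    and [measurable]: "(\<lambda>x. d (x, y)) \<in> borel_measurable eta"
  shows "phi eta Y d l \<noteq> - \<infinity>"
proof -
  have "(\<integral>\<^sup>+x. ennreal (exp (l * d (x, y))) \<partial>eta) \<noteq> 0"
    using prob_space.AE_False[OF assms(1)] by (subst nn_integral_0_iff_AE) auto
  then have "ln_ennreal (\<integral>\<^sup>+x. ennreal (exp (l * d (x, y))) \<partial>eta) \<noteq> - \<infinity>"
    by (simp add: ln_ennreal_eq_MInfty_iff)
  with ln_nn_integral_exp_le_phi[OF assms(2), where eta=eta and l=l and d=d] show ?thesis by auto
qed

lemma nn_integral_exp_minus_phi_le_one:
  fixes d :: "'a \<times> 'b \<Rightarrow> real"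
  assumes "prob_space eta" "prob_space Q" and sQ: "sets Q = sets Y"
    and [measurable]: "d \<in> borel_measurable (eta \<Otimes>\<^sub>M Q)"
    and phi: "phi eta Y d l \<le> ereal c"
  shows "(\<integral>\<^sup>+z. ennreal (exp (l * d z - c)) \<partial>(eta \<Otimes>\<^sub>M Q)) \<le> 1"
proof -
  interpret Q: prob_space Q by fact
  interpret pair_sigma_finite eta Q
    using assms(1,2) by (simp add: pair_sigma_finite_def prob_space_imp_sigma_finite)
  have "(\<integral>\<^sup>+z. ennreal (exp (l * d z - c)) \<partial>(eta \<Otimes>\<^sub>M Q))
      = (\<integral>\<^sup>+y. \<integral>\<^sup>+x. ennreal (exp (l * d (x, y) - c)) \<partial>eta \<partial>Q)"
    by (rule nn_integral_snd[symmetric]) measurable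
  also have "\<dots> \<le> (\<integral>\<^sup>+y. 1 \<partial>Q)"
  proof (rule nn_integral_mono)
    fix y assume "y \<in> space Q"
    then have y: "y \<in> space Y" and [measurable]: "(\<lambda>x. d (x, y)) \<in> borel_measurable eta"
      using sets_eq_imp_space_eq[OF sQ] by simp_all
    have "(\<integral>\<^sup>+x. ennreal (exp (l * d (x, y) - c)) \<partial>eta)
        = (\<integral>\<^sup>+x. ennreal (exp (- c)) * ennreal (exp (l * d (x, y))) \<partial>eta)"
      by (simp add: exp_diff exp_minus divide_inverse ennreal_mult'' mult.commute)
    also have "\<dots> = ennreal (exp (- c)) * (\<integral>\<^sup>+x. ennreal (exp (l * d (x, y))) \<partial>eta)"
      by (rule nn_integral_cmult) measurable
    also have "\<dots> \<le> ennreal (exp (- c)) * ennreal (exp c)"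
      using nn_integral_exp_le_exp_phi[OF phi y] by (rule mult_left_mono) simp
    also have "\<dots> = 1" by (simp add: exp_minus flip: ennreal_mult)
    finally show "(\<integral>\<^sup>+x. ennreal (exp (l * d (x, y) - c)) \<partial>eta) \<le> 1" .
  qed
  also have "\<dots> = 1" by (simp add: Q.emeasure_space_1)
  finally show ?thesis .
qed

lemma density_pair_measure_fst:
  assumes "sigma_finite_measure Q" and [measurable]: "q \<in> borel_measurable M"
  shows "density M q \<Otimes>\<^sub>M Q = density (M \<Otimes>\<^sub>M Q) (\<lambda>z. q (fst z))"
proof -
  have "density M q \<Otimes>\<^sub>M Q = density M q \<Otimes>\<^sub>M density Q (\<lambda>_. 1)"
    by (simp only: density_1)
  also have "\<dots> = density (M \<Otimes>\<^sub>M Q) (\<lambda>(x, y). q x * 1)"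
    using assms by (intro pair_measure_density) (auto simp: density_1)
  also have "\<dots> = density (M \<Otimes>\<^sub>M Q) (\<lambda>z. q (fst z))"
    by (intro density_cong) (auto simp: split_beta')
  finally show ?thesis .
qed

lemma nn_integral_fenchel_pos_neg_parts:
  fixes eta :: "'a measure" and Q :: "'b measure" and d :: "'a \<times> 'b \<Rightarrow> real"
  assumes Q: "sigma_finite_measure Q"
    and zeta: "zeta = density eta (\<lambda>x. ennreal (q x))"
    and P: "P = density (zeta \<Otimes>\<^sub>M Q) (\<lambda>z. ennreal (p z))"
    and [measurable]: "q \<in> borel_measurable eta" "p \<in> borel_measurable (eta \<Otimes>\<^sub>M Q)"
      "d \<in> borel_measurable (eta \<Otimes>\<^sub>M Q)"
    and q: "\<And>x. 0 \<le> q x" and p: "\<And>z. 0 \<le> p z" and c: "0 \<le> c"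
  shows "(\<integral>\<^sup>+z. ennreal c * ennreal (- d z) + ennreal (- ln (q (fst z))) + (ennreal (- b) + 1) \<partial>P)
           + (\<integral>\<^sup>+z. ennreal (- (p z * ln (p z))) \<partial>(zeta \<Otimes>\<^sub>M Q))
    \<le> (\<integral>\<^sup>+z. ennreal c * ennreal (d z) + ennreal (ln (q (fst z))) + ennreal b \<partial>P)
           + (\<integral>\<^sup>+z. ennreal (p z * ln (p z)) \<partial>(zeta \<Otimes>\<^sub>M Q))
           + (\<integral>\<^sup>+z. ennreal (exp (- (c * d z) - b)) \<partial>(eta \<Otimes>\<^sub>M Q))"
proof -
  have zetaQ: "zeta \<Otimes>\<^sub>M Q = density (eta \<Otimes>\<^sub>M Q) (\<lambda>z. ennreal (q (fst z)))"
    unfolding zeta using Q by (rule density_pair_measure_fst) measurable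
  have on_zetaQ: "(\<integral>\<^sup>+z. h z \<partial>(zeta \<Otimes>\<^sub>M Q)) = (\<integral>\<^sup>+z. ennreal (q (fst z)) * h z \<partial>(eta \<Otimes>\<^sub>M Q))"
    if [measurable]: "h \<in> borel_measurable (eta \<Otimes>\<^sub>M Q)" for h
    unfolding zetaQ by (simp add: nn_integral_density)
  have on_P: "(\<integral>\<^sup>+z. h z \<partial>P)
      = (\<integral>\<^sup>+z. ennreal (q (fst z)) * (ennreal (p z) * h z) \<partial>(eta \<Otimes>\<^sub>M Q))"
    if [measurable]: "h \<in> borel_measurable (eta \<Otimes>\<^sub>M Q)" for h
    unfolding P zetaQ by (simp add: nn_integral_density)
  show ?thesis
    using fenchel_pos_neg_parts_ennreal[OF q p c]
    by (simp add: on_P on_zetaQ nn_integral_mono flip: nn_integral_add)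
qed

lemma ereal_lower_bound_of_ennreal_parts:
  fixes Em Ep Cm Cp Am Ap T :: ennreal and l F D r :: real
  assumes l: "l < 0"
    and main: "ennreal (-l) * Em + Cm + (ennreal (- F) + 1) + Am
      \<le> ennreal (-l) * Ep + Cp + ennreal F + Ap + T"
    and C: "enn2ereal Cp - enn2ereal Cm \<le> ereal D" and A: "enn2ereal Ap - enn2ereal Am \<le> ereal r"
    and Cm: "Cm \<noteq> \<infinity>" and Am: "Am \<noteq> \<infinity>" and T: "T \<le> 1"
  shows "ereal (1/l) * (ereal r + ereal D) + ereal (1/l) * ereal F \<le> enn2ereal Ep - enn2ereal Em"
proof (cases "Ep = \<infinity>")
  case False
  have real: "X = ennreal (enn2real X) \<and> 0 \<le> enn2real X" if "X \<noteq> \<infinity>" for X :: ennreal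
    using that by (cases X) (auto simp: enn2real_ennreal)
  have Tf: "T \<noteq> \<infinity>" using T by (auto simp: top_unique)
  have Cpf: "Cp \<noteq> \<infinity>" using C Cm by (auto dest!: real)
  have Apf: "Ap \<noteq> \<infinity>" using A Am by (auto dest!: real)
  have Emf: "Em \<noteq> \<infinity>"
  proof
    assume "Em = \<infinity>"
    then have "ennreal (-l) * Ep + Cp + ennreal F + Ap + T = \<infinity>"
      using main l by (simp add: top_unique)
    then show False using False Cpf Apf Tf by (simp add: ennreal_mult_eq_top_iff)
  qed
  obtain em ep cm cp am ap t where
    e: "Em = ennreal em" "Ep = ennreal ep" "Cm = ennreal cm" "Cp = ennreal cp" "Am = ennreal am"
       "Ap = ennreal ap" "T = ennreal t"
    and nn: "0 \<le> em" "0 \<le> ep" "0 \<le> cm" "0 \<le> cp" "0 \<le> am" "0 \<le> ap" "0 \<le> t"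
    using real[OF Emf] real[OF False] real[OF Cm] real[OF Cpf] real[OF Am] real[OF Apf] real[OF Tf]
    by blast
  define c where "c = - l"
  have c: "0 \<le> c" using l by (simp add: c_def)
  have "ennreal (c * em + cm + (max 0 (- F) + 1) + am) \<le> ennreal (c * ep + cp + max 0 F + ap + t)"
    using main c nn unfolding e c_def[symmetric]
    by (simp add: ennreal_max_0 ennreal_plus ennreal_mult add_nonneg_nonneg)
  then have "c * em + cm + (max 0 (- F) + 1) + am \<le> c * ep + cp + max 0 F + ap + t"
    using c nn by (subst (asm) ennreal_le_iff) (auto intro!: add_nonneg_nonneg)
  moreover have "t \<le> 1" "cp - cm \<le> D" "ap - am \<le> r"
    using T C A nn unfolding e by simp_all
  ultimately have "l * (ep - em) \<le> r + D + F"
    by (simp add: c_def algebra_simps max_def split: if_splits)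
  then have "(r + D + F) / l \<le> ep - em"
    using l by (simp add: neg_divide_le_eq mult.commute)
  then show ?thesis using nn unfolding e by (simp add: field_simps add_divide_distrib)
qed simp

lemma expectation_lower_bound_finite:
  fixes zeta eta :: "'a measure" and Y :: "'b measure" and d :: "'a \<times> 'b \<Rightarrow> real"
  assumes zeta: "prob_space zeta" and eta: "prob_space eta" and sets_eta: "sets eta = sets zeta"
    and [measurable]: "d \<in> borel_measurable (zeta \<Otimes>\<^sub>M Y)"
    and K: "K \<in> zeta \<rightarrow>\<^sub>M prob_algebra Y" and MI: "mutual_info zeta Y K \<le> ereal r"
    and l: "l < 0" and D: "kl_div zeta eta = ereal D" and F: "phi eta Y d l = ereal F"
  shows "ereal (1/l) * (ereal r + ereal D) + ereal (1/l) * ereal F \<le> ereal_expect (joint zeta Y K) d"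
proof -
  define P where "P = joint zeta Y K"
  define Q where "Q = distr P Y snd"
  interpret P: prob_space P unfolding P_def using zeta K by (rule prob_space_joint)
  have sets_P: "sets P = sets (zeta \<Otimes>\<^sub>M Y)" unfolding P_def using zeta K by (rule sets_joint)
  have "snd \<in> P \<rightarrow>\<^sub>M Y" by (simp add: measurable_cong_sets[OF sets_P refl])
  then interpret Q: prob_space Q unfolding Q_def by (rule P.prob_space_distr)
  have sets_Q: "sets Q = sets Y" by (simp add: Q_def)
  have sets_zetaQ: "sets (zeta \<Otimes>\<^sub>M Q) = sets (eta \<Otimes>\<^sub>M Q)"
    using sets_eta by (intro sets_pair_measure_cong) simp_all
  have sets_P_Q: "sets P = sets (zeta \<Otimes>\<^sub>M Q)"
    using sets_P sets_pair_measure_cong[OF refl sets_Q, of zeta] by simp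
  note [measurable_cong] = sets_eta sets_Q sets_P sets_zetaQ
  have zetaQ: "prob_space (zeta \<Otimes>\<^sub>M Q)" by (rule prob_space_pair[OF zeta Q.prob_space_axioms])
  have "kl_div P (zeta \<Otimes>\<^sub>M Q) \<le> ereal r"
    using MI unfolding mutual_info_def P_def Q_def .
  define q where "q x = enn2real (RN_deriv eta zeta x)" for x
  define p where "p z = enn2real (RN_deriv (zeta \<Otimes>\<^sub>M Q) P z)" for z
  note kl_zeta = kl_div_le_ereal_parts[OF eta zeta sets_eta[symmetric] eq_refl[OF D], folded q_def]
  note kl_P = kl_div_le_ereal_parts[OF zetaQ P.prob_space_axioms sets_P_Q \<open>kl_div P _ \<le> _\<close>,
      folded p_def]
  have [measurable]: "q \<in> borel_measurable eta" "p \<in> borel_measurable (eta \<Otimes>\<^sub>M Q)"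
    unfolding q_def p_def by measurable
  have q: "0 \<le> q x" and p: "0 \<le> p z" for x z by (simp_all add: q_def p_def)
  have on_P: "(\<integral>\<^sup>+z. ennreal (-l) * ennreal (g z) + ennreal (h (q (fst z))) + k \<partial>P)
      = ennreal (-l) * (\<integral>\<^sup>+z. ennreal (g z) \<partial>P) + (\<integral>\<^sup>+x. ennreal (q x * h (q x)) \<partial>eta) + k"
    if [measurable]: "g \<in> borel_measurable P" "h \<in> borel_measurable borel" for g h k
  proof -
    have "(\<integral>\<^sup>+z. ennreal (h (q (fst z))) \<partial>P) = (\<integral>\<^sup>+x. ennreal (h (q x)) \<partial>zeta)"
      unfolding P_def using K by (rule nn_integral_joint_fst) measurable
    also have "\<dots> = (\<integral>\<^sup>+x. ennreal (q x * h (q x)) \<partial>eta)"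
      by (subst kl_zeta(1)) (simp add: nn_integral_density ennreal_mult' q)
    finally show ?thesis
      by (simp add: nn_integral_add nn_integral_cmult P.emeasure_space_1)
  qed
  have "ennreal (-l) * (\<integral>\<^sup>+z. ennreal (- d z) \<partial>P) + (\<integral>\<^sup>+x. ennreal (- (q x * ln (q x))) \<partial>eta)
          + (ennreal (- F) + 1) + (\<integral>\<^sup>+z. ennreal (- (p z * ln (p z))) \<partial>(zeta \<Otimes>\<^sub>M Q))
      \<le> ennreal (-l) * (\<integral>\<^sup>+z. ennreal (d z) \<partial>P) + (\<integral>\<^sup>+x. ennreal (q x * ln (q x)) \<partial>eta)
          + ennreal F + (\<integral>\<^sup>+z. ennreal (p z * ln (p z)) \<partial>(zeta \<Otimes>\<^sub>M Q))
          + (\<integral>\<^sup>+z. ennreal (exp (l * d z - F)) \<partial>(eta \<Otimes>\<^sub>M Q))"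
    using nn_integral_fenchel_pos_neg_parts[OF prob_space_imp_sigma_finite[OF Q.prob_space_axioms]
        kl_zeta(1) kl_P(1) _ _ _ q p, where c="-l" and b=F and d=d] l
    by (simp add: on_P[of "\<lambda>z. - d z" "\<lambda>u. - ln u"] on_P[of d ln])
  moreover have "(\<integral>\<^sup>+z. ennreal (exp (l * d z - F)) \<partial>(eta \<Otimes>\<^sub>M Q)) \<le> 1"
    by (rule nn_integral_exp_minus_phi_le_one[OF eta Q.prob_space_axioms sets_Q _ eq_refl[OF F]])
      measurable
  ultimately show ?thesis
    unfolding ereal_expect_def P_def[symmetric]
    by (rule ereal_lower_bound_of_ennreal_parts[OF l _ kl_zeta(2) kl_P(2) kl_zeta(3) kl_P(3)])
qed

lemma expectation_lower_bound:
  fixes zeta eta :: "'a measure" and Y :: "'b measure" and d :: "'a \<times> 'b \<Rightarrow> real"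
  assumes zeta: "prob_space zeta" and eta: "prob_space eta" and sets_eta: "sets eta = sets zeta"
    and d: "d \<in> borel_measurable (zeta \<Otimes>\<^sub>M Y)"
    and K: "K \<in> zeta \<rightarrow>\<^sub>M prob_algebra Y" and MI: "mutual_info zeta Y K \<le> ereal r"
    and l: "l < 0"
  shows "ereal (1/l) * (ereal r + kl_div zeta eta) + ereal (1/l) * phi eta Y d l
    \<le> ereal_expect (joint zeta Y K) d"
proof -
  obtain x where "x \<in> space zeta" using prob_space.not_empty[OF zeta] by blast
  then have "prob_space (K x)" "sets (K x) = sets Y"
    using measurable_space[OF K] by (auto simp: space_prob_algebra)
  then obtain y where y: "y \<in> space Y"
    using prob_space.not_empty sets_eq_imp_space_eq by blast
  have "(\<lambda>x. d (x, y)) \<in> borel_measurable eta"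
    using d y by (simp add: measurable_cong_sets[OF sets_eta])
  then have phi: "phi eta Y d l \<noteq> - \<infinity>" by (rule phi_neq_MInfty[OF eta y])
  show ?thesis
  proof (cases "kl_div zeta eta"; cases "phi eta Y d l")
    fix D F assume "kl_div zeta eta = ereal D" "phi eta Y d l = ereal F"
    then show ?thesis using expectation_lower_bound_finite[OF assms] by simp
  qed (use l phi kl_div_neq_MInfty[of zeta eta] in auto)
qed

theorem theorem3:
  fixes zeta eta :: "'a measure" and Y :: "'b measure" and d :: "'a \<times> 'b \<Rightarrow> real"
    and b :: ereal and r :: real
  assumes "prob_space zeta" and "prob_space eta" and "sets eta = sets zeta"
    and "d \<in> borel_measurable (zeta \<Otimes>\<^sub>M Y)"
    and "b > 0" and "r \<ge> 0"
  shows "(INF K \<in> {K. K \<in> zeta \<rightarrow>\<^sub>M prob_algebra Y \<and> mutual_info zeta Y K \<le> ereal r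
                      \<and> expect_defined (joint zeta Y K) d}.
            ereal_expect (joint zeta Y K) d)
         \<ge> (SUP l \<in> {l. - b < ereal l \<and> l < 0}.
              ereal (1 / l) * (ereal r + kl_div zeta eta) + ereal (1 / l) * phi eta Y d l)"
  using expectation_lower_bound[OF assms(1-4)] by (auto intro!: SUP_least INF_greatest)

end
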